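(* Let $n\ge2$, $\lambda\in(-1,1)$, let $g$ be $\mathscr{R}$-admissible and infinitesimal, and let $G$ be $\mathscr{G}$-admissible. There exists $c>0$ depending on $n,\lambda,g,G$ such that for every $m\ge1$ there exists $E\subset\mathbb{R}^n\setminus H$ with $|E|=m$ and $\mathscr{F}^\lambda(E)\le c\,m$.
   Context: $H:=\{x\in\mathbb{R}^n: x_n\le 0\}$; $|\cdot|$ is Lebesgue measure, $\mathcal{H}^{n-1}$ the $(n-1)$-dimensional Hausdorff measure, $P(E,A)$ the perimeter of $E$ in the open set $A$, $\partial^*E$ the reduced boundary. For measurable $E\subset\mathbb{R}^n\setminus H$: $P_\lambda(E):=P(E,\mathbb{R}^n\setminus H)-\lambda\mathcal{H}^{n-1}(\partial^*E\cap\partial H)$; $\mathscr{R}(E):=\int_E\int_E g(y-x)\,dy\,dx$; $\mathscr{G}(E):=\int_E G(x_n)\,dx$; $\mathscr{F}^\lambda(E):=P_\lambda(E)+\mathscr{R}(E)+\mathscr{G}(E)$. $g:\mathbb{R}^n\setminus\{0\}\to(0,\infty)$ is $\mathscr{R}$-admissible if $\mathscr{R}(B_1)<\infty$; infinitesimal if $g(x)\to0$ as $|x|\to\infty$. $G:(0,\infty)\to(0,\infty)$ is $\mathscr{G}$-admissible if $\sup_{t\in(0,2)}G(t)<\infty$ and $G(\alpha t)\le\alpha^nG(t)$ for all $\alpha>1,t>0$. *)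

theory Defs
  imports "HOL-Analysis.Analysis"
begin

text \<open>Ambient space: R^n is modelled as the product type 'b \<times> real, where 'b is any
  euclidean space (of dimension n-1 \<ge> 1); the last coordinate x_n is snd x.
  Thus n = DIM('b \<times> real) \<ge> 2 automatically.\<close>

definition lower_half :: "('b::euclidean_space \<times> real) set" where
  "lower_half = {x. snd x \<le> 0}"

definition Cc1_fields :: "'a::euclidean_space set \<Rightarrow> ('a \<Rightarrow> 'a) set" where
  "Cc1_fields A = {T. (\<exists>T'. (\<forall>x. (T has_derivative T' x) (at x)) \<and>
                          (\<forall>v. continuous_on UNIV (\<lambda>x. T' x v))) \<and>
                     compact (closure {x. T x \<noteq> 0}) \<and> closure {x. T x \<noteq> 0} \<subseteq> A}"

definition divergence :: "('a::euclidean_space \<Rightarrow> 'a) \<Rightarrow> 'a \<Rightarrow> real" where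
  "divergence T x = (\<Sum>b\<in>Basis. frechet_derivative T (at x) b \<bullet> b)"

definition perimeter :: "'a::euclidean_space set \<Rightarrow> 'a set \<Rightarrow> ereal" where
  "perimeter E A = (SUP T \<in> {T \<in> Cc1_fields A. \<forall>x. norm (T x) \<le> 1}.
                       ereal (LINT x:E|lebesgue. divergence T x))"

text \<open>s-dimensional Hausdorff measure (normalised so that H^k agrees with
  k-dimensional Lebesgue measure on k-planes).\<close>
definition hausdorff_omega :: "real \<Rightarrow> real" where
  "hausdorff_omega s = pi powr (s / 2) / Gamma (s / 2 + 1)"

definition hausdorff_delta :: "real \<Rightarrow> real \<Rightarrow> 'a::metric_space set \<Rightarrow> ennreal" where
  "hausdorff_delta s \<delta> S = (INF C \<in> {C :: nat \<Rightarrow> 'a set. S \<subseteq> (\<Union>i. C i) \<and> (\<forall>i. bounded (C i) \<and> diameter (C i) \<le> \<delta>)}.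
       (\<Sum>i. ennreal (hausdorff_omega s * (diameter (C i) / 2) powr s)))"

definition hausdorff_measure :: "real \<Rightarrow> 'a::metric_space set \<Rightarrow> ennreal" where
  "hausdorff_measure s S = (SUP \<delta> \<in> {0<..}. hausdorff_delta s \<delta> S)"

text \<open>Gauss--Green measure of E: mu is |mu_E| (a locally finite Borel measure), nu the
  polar density, so that int_E div T = int T . nu d mu for all T in C^1_c.\<close>
definition gauss_green :: "'a::euclidean_space set \<Rightarrow> 'a measure \<Rightarrow> ('a \<Rightarrow> 'a) \<Rightarrow> bool" where
  "gauss_green E \<mu> \<nu> \<longleftrightarrow> sets \<mu> = sets borel \<and>
     (\<forall>K. compact K \<longrightarrow> emeasure \<mu> K < \<infinity>) \<and>
     \<nu> \<in> borel_measurable borel \<and> (\<forall>x. norm (\<nu> x) = 1) \<and>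
     (\<forall>T \<in> Cc1_fields UNIV.
        (LINT x:E|lebesgue. divergence T x) = (LINT x|\<mu>. T x \<bullet> \<nu> x))"

definition reduced_boundary :: "'a::euclidean_space set \<Rightarrow> 'a set" where
  "reduced_boundary E = {x. \<exists>\<mu> \<nu>. gauss_green E \<mu> \<nu> \<and>
      (\<forall>r>0. emeasure \<mu> (ball x r) > 0) \<and>
      (\<exists>u. norm u = 1 \<and>
         ((\<lambda>r. (1 / measure \<mu> (ball x r)) *\<^sub>R (\<integral>y. indicator (ball x r) y *\<^sub>R \<nu> y \<partial>\<mu>))
            \<longlongrightarrow> u) (at_right 0))}"

definition P_lambda :: "real \<Rightarrow> ('b::euclidean_space \<times> real) set \<Rightarrow> ereal" where
  "P_lambda lam E = perimeter E (- lower_half)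
     - ereal lam * enn2ereal (hausdorff_measure (real DIM('b \<times> real) - 1)
                                 (reduced_boundary E \<inter> frontier lower_half))"

definition R_energy :: "('a::euclidean_space \<Rightarrow> real) \<Rightarrow> 'a set \<Rightarrow> ennreal" where
  "R_energy g E = (\<integral>\<^sup>+ x. (\<integral>\<^sup>+ y. ennreal (g (y - x)) * indicator E y \<partial>lebesgue) * indicator E x \<partial>lebesgue)"

definition G_energy :: "(real \<Rightarrow> real) \<Rightarrow> ('b::euclidean_space \<times> real) set \<Rightarrow> ennreal" where
  "G_energy G E = (\<integral>\<^sup>+ x. ennreal (G (snd x)) * indicator E x \<partial>lebesgue)"

definition F_energy :: "real \<Rightarrow> (('b::euclidean_space \<times> real) \<Rightarrow> real) \<Rightarrow> (real \<Rightarrow> real)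
                         \<Rightarrow> ('b \<times> real) set \<Rightarrow> ereal" where
  "F_energy lam g G E = P_lambda lam E + enn2ereal (R_energy g E) + enn2ereal (G_energy G E)"

definition R_admissible :: "('a::euclidean_space \<Rightarrow> real) \<Rightarrow> bool" where
  "R_admissible g \<longleftrightarrow> (\<forall>x. x \<noteq> 0 \<longrightarrow> g x > 0) \<and> R_energy g (ball 0 1) < \<infinity>"

definition infinitesimal :: "('a::euclidean_space \<Rightarrow> real) \<Rightarrow> bool" where
  "infinitesimal g \<longleftrightarrow> (g \<longlongrightarrow> 0) at_infinity"

definition G_admissible :: "nat \<Rightarrow> (real \<Rightarrow> real) \<Rightarrow> bool" where
  "G_admissible n G \<longleftrightarrow> (\<forall>t>0. G t > 0) \<and> bdd_above (G ` {0<..<2}) \<and>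
      (\<forall>\<alpha> t. \<alpha> > 1 \<longrightarrow> t > 0 \<longrightarrow> G (\<alpha> * t) \<le> \<alpha> ^ n * G t)"

end

theory Submission
  imports Defs
begin

(* Take E to be a row of N congruent thin boxes [a, a + s]^(n-1) x [1, 1 + t] with s = 1/(4n),
   placed side by side along a coordinate axis at mutual distance at least R, where g <= 1/m
   beyond R, and with N of order m / s^n so that the total volume is m.  Since E stays at
   height 1 above the boundary of H, its reduced boundary misses that boundary and P_lambda(E)
   is the plain perimeter, at most 2 n N by comparing E with its translates.  Each box has
   diameter less than 1/2, so the interaction of a point with its own box is at most the
   integral of g over B_(1/2), finite by admissibility, and with the other boxes at most
   |E| / m = 1; G is bounded on the heights [1, 1 + t] < 2 occupied by E.  All three
   energies are thus O(m). *)

section \<open>Smooth cut-offs\<close>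

lemma DERIV_glue:
  fixes f p q :: "real \<Rightarrow> real"
  assumes "(p has_real_derivative D) (at x)" "(q has_real_derivative D) (at x)" "0 < \<delta>"
    and "\<And>y. x - \<delta> < y \<Longrightarrow> y \<le> x \<Longrightarrow> f y = p y"
    and "\<And>y. x \<le> y \<Longrightarrow> y < x + \<delta> \<Longrightarrow> f y = q y"
  shows "(f has_real_derivative D) (at x)"
  using assms(1,2) unfolding DERIV_def filterlim_at_split
proof (elim conjE, intro conjI)
  assume "((\<lambda>h. (p (x + h) - p x) / h) \<longlongrightarrow> D) (at_left 0)"
  moreover have "\<forall>\<^sub>F h in at_left 0. (p (x + h) - p x) / h = (f (x + h) - f x) / h"
    unfolding eventually_at_left_field using assms(3-4) by (intro exI[of _ "- \<delta>"]) auto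
  ultimately show "((\<lambda>h. (f (x + h) - f x) / h) \<longlongrightarrow> D) (at_left 0)"
    by (rule Lim_transform_eventually)
next
  assume "((\<lambda>h. (q (x + h) - q x) / h) \<longlongrightarrow> D) (at_right 0)"
  moreover have "\<forall>\<^sub>F h in at_right 0. (q (x + h) - q x) / h = (f (x + h) - f x) / h"
    unfolding eventually_at_right_field using assms(3,5) by (intro exI[of _ \<delta>]) auto
  ultimately show "((\<lambda>h. (f (x + h) - f x) / h) \<longlongrightarrow> D) (at_right 0)"
    by (rule Lim_transform_eventually)
qed

definition smoothstep :: "real \<Rightarrow> real" where
  "smoothstep t = (if t \<le> 0 then 0 else if 1 \<le> t then 1 else 3 * t^2 - 2 * t^3)"

definition smoothstep' :: "real \<Rightarrow> real" where
  "smoothstep' t = (if t \<le> 0 then 0 else if 1 \<le> t then 0 else 6 * t - 6 * t^2)"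

lemma smoothstep_eq_0: "t \<le> 0 \<Longrightarrow> smoothstep t = 0"
  and smoothstep'_eq_0: "t \<le> 0 \<Longrightarrow> smoothstep' t = 0"
  and smoothstep_eq_1: "1 \<le> t \<Longrightarrow> smoothstep t = 1"
  by (simp_all add: smoothstep_def smoothstep'_def)

lemma smoothstep_bounds: "0 \<le> smoothstep t" "smoothstep t \<le> 1"
proof -
  have "0 \<le> 3 * t^2 - 2 * t^3 \<and> 3 * t^2 - 2 * t^3 \<le> 1" if "0 < t" "t < 1"
  proof -
    have "3 * t^2 - 2 * t^3 = t^2 * (3 - 2 * t)" "3 * t^2 - 2 * t^3 = 1 - (1 - t)^2 * (1 + 2 * t)"
      by algebra+
    moreover have "0 \<le> t^2 * (3 - 2 * t)" "0 \<le> (1 - t)^2 * (1 + 2 * t)"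
      using that by simp_all
    ultimately show ?thesis by linarith
  qed
  then show "0 \<le> smoothstep t" "smoothstep t \<le> 1"
    unfolding smoothstep_def by (auto simp: not_le)
qed

lemma smoothstep_clamp: "smoothstep t = 3 * (max 0 (min 1 t))^2 - 2 * (max 0 (min 1 t))^3"
  and smoothstep'_clamp: "smoothstep' t = 6 * max 0 (min 1 t) - 6 * (max 0 (min 1 t))^2"
  by (auto simp: smoothstep_def smoothstep'_def)

lemma continuous_on_smoothstep: "continuous_on UNIV smoothstep"
  and continuous_on_smoothstep': "continuous_on UNIV smoothstep'"
  unfolding smoothstep_clamp[abs_def] smoothstep'_clamp[abs_def] by (intro continuous_intros)+

lemma has_real_derivative_smoothstep: "(smoothstep has_real_derivative smoothstep' t) (at t)"
proof -
  define p :: "real \<Rightarrow> real" where "p t = 3 * t^2 - 2 * t^3" for t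
  have p: "(p has_real_derivative 6 * t - 6 * t^2) (at t)" for t
    unfolding p_def by (auto intro!: derivative_eq_intros simp: power2_eq_square)
  have "t < 0 \<or> t = 0 \<or> (0 < t \<and> t < 1) \<or> t = 1 \<or> 1 < t" by linarith
  then show ?thesis
  proof (elim disjE conjE)
    assume "t < 0"
    have "(smoothstep has_real_derivative 0) (at t)"
      by (rule DERIV_glue[OF DERIV_const DERIV_const, where \<delta>="- t"])
         (use \<open>t < 0\<close> in \<open>auto simp: smoothstep_def\<close>)
    with \<open>t < 0\<close> show ?thesis by (simp add: smoothstep'_def)
  next
    assume "t = 0"
    have "(smoothstep has_real_derivative 0) (at 0)"
      by (rule DERIV_glue[OF DERIV_const p[of 0, simplified], where \<delta>=1])
         (auto simp: smoothstep_def p_def)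
    with \<open>t = 0\<close> show ?thesis by (simp add: smoothstep'_def)
  next
    assume "0 < t" "t < 1"
    have "(smoothstep has_real_derivative 6 * t - 6 * t^2) (at t)"
      by (rule DERIV_glue[OF p p, where \<delta>="min t (1 - t)"])
         (use \<open>0 < t\<close> \<open>t < 1\<close> in \<open>auto simp: smoothstep_def p_def\<close>)
    with \<open>0 < t\<close> \<open>t < 1\<close> show ?thesis by (simp add: smoothstep'_def)
  next
    assume "t = 1"
    have "(smoothstep has_real_derivative 0) (at 1)"
      by (rule DERIV_glue[OF p[of 1, simplified] DERIV_const, where \<delta>=1])
         (auto simp: smoothstep_def p_def)
    with \<open>t = 1\<close> show ?thesis by (simp add: smoothstep'_def)
  next
    assume "1 < t"
    have "(smoothstep has_real_derivative 0) (at t)"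
      by (rule DERIV_glue[OF DERIV_const DERIV_const, where \<delta>="t - 1"])
         (use \<open>1 < t\<close> in \<open>auto simp: smoothstep_def\<close>)
    with \<open>1 < t\<close> show ?thesis by (simp add: smoothstep'_def)
  qed
qed

definition ball_cutoff :: "'a::real_inner \<Rightarrow> real \<Rightarrow> nat \<Rightarrow> 'a \<Rightarrow> real" where
  "ball_cutoff x r k y = smoothstep (real (Suc k) * (r^2 - (y - x) \<bullet> (y - x)))"

definition ball_cutoff' :: "'a::real_inner \<Rightarrow> real \<Rightarrow> nat \<Rightarrow> 'a \<Rightarrow> 'a \<Rightarrow> real" where
  "ball_cutoff' x r k y v =
     smoothstep' (real (Suc k) * (r^2 - (y - x) \<bullet> (y - x))) * (real (Suc k) * (- 2 * ((y - x) \<bullet> v)))"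

lemma ball_cutoff_outside:
  assumes "0 \<le> r" "r \<le> norm (y - x)"
  shows "ball_cutoff x r k y = 0" "ball_cutoff' x r k y = (\<lambda>v. 0)"
proof -
  have "r^2 \<le> (norm (y - x))^2" using assms by (intro power_mono)
  then have "real (Suc k) * (r^2 - (y - x) \<bullet> (y - x)) \<le> 0"
    by (simp add: power2_norm_eq_inner mult_nonneg_nonpos)
  then show "ball_cutoff x r k y = 0" "ball_cutoff' x r k y = (\<lambda>v. 0)"
    by (simp_all add: ball_cutoff_def ball_cutoff'_def smoothstep_eq_0 smoothstep'_eq_0 fun_eq_iff)
qed

lemma abs_ball_cutoff_le: "\<bar>ball_cutoff x r k y\<bar> \<le> 1"
  using smoothstep_bounds by (simp add: ball_cutoff_def)

lemma abs_ball_cutoff_inner_le: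
  assumes "0 \<le> r"
  shows "\<bar>ball_cutoff x r k y * (w \<bullet> v)\<bar> \<le> norm w * norm v * indicator (cball x r) y"
proof (cases "y \<in> cball x r")
  case True
  have "\<bar>ball_cutoff x r k y\<bar> * \<bar>w \<bullet> v\<bar> \<le> 1 * (norm w * norm v)"
    using abs_ball_cutoff_le[of x r k y] Cauchy_Schwarz_ineq2[of w v] by (intro mult_mono) auto
  then show ?thesis
    using True by (simp add: abs_mult)
next
  case False
  then show ?thesis
    using ball_cutoff_outside(1)[OF assms, of y x k] by (simp add: dist_norm norm_minus_commute)
qed

lemma continuous_on_ball_cutoff: "continuous_on UNIV (ball_cutoff x r k)"
  unfolding ball_cutoff_def
  by (rule continuous_on_compose2[OF continuous_on_smoothstep]) (auto intro!: continuous_intros)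

lemma continuous_on_ball_cutoff': "continuous_on UNIV (\<lambda>y. ball_cutoff' x r k y v)"
  unfolding ball_cutoff'_def
  by (intro continuous_intros continuous_on_compose2[OF continuous_on_smoothstep']) auto

lemma has_derivative_ball_cutoff: "(ball_cutoff x r k has_derivative ball_cutoff' x r k y) (at y)"
proof -
  have "((\<lambda>y. real (Suc k) * (r^2 - (y - x) \<bullet> (y - x))) has_derivative
          (\<lambda>v. real (Suc k) * (- 2 * ((y - x) \<bullet> v)))) (at y)"
    by (auto intro!: derivative_eq_intros simp: inner_commute)
  from DERIV_compose_FDERIV[OF has_real_derivative_smoothstep this]
  show ?thesis
    unfolding ball_cutoff_def[abs_def] ball_cutoff'_def[abs_def] by (simp add: mult.commute)
qed

lemma ball_cutoff_LIMSEQ: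
  assumes "0 < r"
  shows "(\<lambda>k. ball_cutoff x r k y) \<longlonglongrightarrow> indicator (ball x r) y"
proof (cases "norm (y - x) < r")
  case True
  then have "(norm (y - x))^2 < r^2" by (intro power_strict_mono) auto
  then have pos: "0 < r^2 - (y - x) \<bullet> (y - x)" by (simp add: power2_norm_eq_inner)
  obtain N :: nat where N: "1 / (r^2 - (y - x) \<bullet> (y - x)) < real N"
    using reals_Archimedean2 by blast
  have "ball_cutoff x r k y = 1" if "N \<le> k" for k
  proof -
    have "1 / (r^2 - (y - x) \<bullet> (y - x)) \<le> real (Suc k)" using N that by linarith
    then have "1 \<le> real (Suc k) * (r^2 - (y - x) \<bullet> (y - x))"
      using pos by (simp add: field_simps)
    then show ?thesis by (simp add: ball_cutoff_def smoothstep_eq_1)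
  qed
  then have "\<forall>\<^sub>F k in sequentially. ball_cutoff x r k y = indicator (ball x r) y"
    using True by (auto simp: eventually_sequentially dist_norm norm_minus_commute)
  then show ?thesis by (rule tendsto_eventually)
next
  case False
  then have "ball_cutoff x r k y = 0" for k
    using assms by (intro ball_cutoff_outside) auto
  then show ?thesis
    using False by (simp add: dist_norm norm_minus_commute)
qed

lemma ball_cutoff_field_in_Cc1_fields:
  assumes "0 \<le> r"
  shows "(\<lambda>y. ball_cutoff x r k y *\<^sub>R w) \<in> Cc1_fields UNIV"
proof -
  have "((\<lambda>y. ball_cutoff x r k y *\<^sub>R w) has_derivative (\<lambda>v. ball_cutoff' x r k y v *\<^sub>R w)) (at y)" for y
    by (auto intro!: derivative_eq_intros has_derivative_ball_cutoff)
  moreover have "continuous_on UNIV (\<lambda>y. ball_cutoff' x r k y v *\<^sub>R w)" for v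
    by (intro continuous_intros continuous_on_ball_cutoff')
  moreover have "{y. ball_cutoff x r k y *\<^sub>R w \<noteq> 0} \<subseteq> cball x r"
  proof
    fix y assume "y \<in> {y. ball_cutoff x r k y *\<^sub>R w \<noteq> 0}"
    then have "\<not> r \<le> norm (y - x)" using ball_cutoff_outside(1)[OF assms, of y x k] by auto
    then show "y \<in> cball x r" by (simp add: dist_norm norm_minus_commute)
  qed
  then have "compact (closure {y. ball_cutoff x r k y *\<^sub>R w \<noteq> 0})"
    by (meson bounded_cball bounded_subset compact_closure)
  ultimately show ?thesis
    unfolding Cc1_fields_def
    by (intro CollectI conjI exI[of _ "\<lambda>y v. ball_cutoff' x r k y v *\<^sub>R w"]) auto
qed

section \<open>The reduced boundary lies in the closure\<close>

lemma divergence_ball_cutoff_field: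
  assumes "0 \<le> r" "r \<le> norm (y - x)"
  shows "divergence (\<lambda>y. ball_cutoff x r k y *\<^sub>R w) y = 0"
proof -
  have "((\<lambda>y. ball_cutoff x r k y *\<^sub>R w) has_derivative (\<lambda>v. ball_cutoff' x r k y v *\<^sub>R w)) (at y)"
    by (auto intro!: derivative_eq_intros has_derivative_ball_cutoff)
  then have "frechet_derivative (\<lambda>y. ball_cutoff x r k y *\<^sub>R w) (at y) = (\<lambda>v. 0)"
    using ball_cutoff_outside(2)[OF assms] by (simp add: frechet_derivative_at[symmetric])
  then show ?thesis by (simp add: divergence_def)
qed

lemma gauss_green_ball_cutoff_eq_0:
  assumes gg: "gauss_green E \<mu> \<nu>" and "0 \<le> r" and disj: "ball x r \<inter> E = {}"
  shows "(\<integral>y. ball_cutoff x r k y * (w \<bullet> \<nu> y) \<partial>\<mu>) = 0"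
proof -
  have "divergence (\<lambda>y. ball_cutoff x r k y *\<^sub>R w) y = 0" if "y \<in> E" for y
  proof (rule divergence_ball_cutoff_field[OF \<open>0 \<le> r\<close>])
    have "y \<notin> ball x r" using disj that by blast
    then show "r \<le> norm (y - x)" by (simp add: dist_norm norm_minus_commute)
  qed
  then have "(\<lambda>y. indicator E y *\<^sub>R divergence (\<lambda>y. ball_cutoff x r k y *\<^sub>R w) y) = (\<lambda>y. 0)"
    by (auto simp: fun_eq_iff split: split_indicator)
  then have "(LINT y:E|lebesgue. divergence (\<lambda>y. ball_cutoff x r k y *\<^sub>R w) y) = 0"
    unfolding set_lebesgue_integral_def by simp
  moreover have "(LINT y:E|lebesgue. divergence (\<lambda>y. ball_cutoff x r k y *\<^sub>R w) y)
      = (LINT y|\<mu>. ball_cutoff x r k y *\<^sub>R w \<bullet> \<nu> y)"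
    using gg ball_cutoff_field_in_Cc1_fields[OF \<open>0 \<le> r\<close>] unfolding gauss_green_def by blast
  ultimately show ?thesis by simp
qed

lemma gauss_green_integral_ball_eq_0:
  fixes E :: "'a::euclidean_space set"
  assumes gg: "gauss_green E \<mu> \<nu>" and "0 < r" and disj: "ball x r \<inter> E = {}"
  shows "(\<integral>y. indicator (ball x r) y * (w \<bullet> \<nu> y) \<partial>\<mu>) = 0"
proof -
  have sets_mu: "sets \<mu> = sets borel" and fin: "emeasure \<mu> (cball x r) < \<infinity>"
    and nu_meas: "\<nu> \<in> borel_measurable borel" and nu_norm: "\<And>y. norm (\<nu> y) = 1"
    using gg unfolding gauss_green_def by auto
  have meas_eq: "borel_measurable \<mu> = borel_measurable borel"
    by (rule measurable_cong_sets) (use sets_mu in auto)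
  have "(\<lambda>k. \<integral>y. ball_cutoff x r k y * (w \<bullet> \<nu> y) \<partial>\<mu>) \<longlonglongrightarrow> (\<integral>y. indicator (ball x r) y * (w \<bullet> \<nu> y) \<partial>\<mu>)"
  proof (rule integral_dominated_convergence[where w="\<lambda>y. norm w * indicator (cball x r) y"])
    show "(\<lambda>y. indicator (ball x r) y * (w \<bullet> \<nu> y)) \<in> borel_measurable \<mu>"
      unfolding meas_eq using nu_meas
      by (intro borel_measurable_times borel_measurable_indicator borel_measurable_inner) auto
    show "(\<lambda>y. ball_cutoff x r k y * (w \<bullet> \<nu> y)) \<in> borel_measurable \<mu>" for k
      unfolding meas_eq using nu_meas borel_measurable_continuous_onI[OF continuous_on_ball_cutoff]
      by (intro borel_measurable_times borel_measurable_inner) auto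
    show "integrable \<mu> (\<lambda>y. norm w * indicator (cball x r) y)"
      using sets_mu fin by auto
    show "AE y in \<mu>. (\<lambda>k. ball_cutoff x r k y * (w \<bullet> \<nu> y)) \<longlonglongrightarrow> indicator (ball x r) y * (w \<bullet> \<nu> y)"
      using \<open>0 < r\<close> by (intro AE_I2 tendsto_mult_right ball_cutoff_LIMSEQ)
    have "\<bar>ball_cutoff x r k y * (w \<bullet> \<nu> y)\<bar> \<le> norm w * indicator (cball x r) y" for k y
      using abs_ball_cutoff_inner_le[of r x k y w "\<nu> y"] nu_norm \<open>0 < r\<close> by simp
    then show "AE y in \<mu>. norm (ball_cutoff x r k y * (w \<bullet> \<nu> y)) \<le> norm w * indicator (cball x r) y" for k
      by simp
  qed
  moreover have "(\<integral>y. ball_cutoff x r k y * (w \<bullet> \<nu> y) \<partial>\<mu>) = 0" for k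
    using gg \<open>0 < r\<close> disj by (intro gauss_green_ball_cutoff_eq_0) auto
  ultimately have "(\<lambda>k. 0) \<longlonglongrightarrow> (\<integral>y. indicator (ball x r) y * (w \<bullet> \<nu> y) \<partial>\<mu>)"
    by simp
  then show ?thesis
    by (simp add: LIMSEQ_const_iff)
qed

lemma gauss_green_integral_ball_polar_eq_0:
  fixes E :: "'a::euclidean_space set"
  assumes gg: "gauss_green E \<mu> \<nu>" and "0 < r" and "ball x r \<inter> E = {}"
  shows "(\<integral>y. indicator (ball x r) y *\<^sub>R \<nu> y \<partial>\<mu>) = 0"
proof (rule euclidean_eqI)
  fix w :: 'a
  have sets_mu: "sets \<mu> = sets borel" and fin: "emeasure \<mu> (cball x r) < \<infinity>"
    and nu_meas: "\<nu> \<in> borel_measurable borel" and nu_norm: "\<And>y. norm (\<nu> y) = 1"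
    using gg unfolding gauss_green_def by auto
  have "borel_measurable \<mu> = borel_measurable borel"
    by (rule measurable_cong_sets) (use sets_mu in auto)
  then have intg: "integrable \<mu> (\<lambda>y. indicator (ball x r) y *\<^sub>R \<nu> y)"
    by (intro integrableI_bounded_set_indicator[where B=1])
       (use sets_mu fin nu_norm nu_meas in \<open>auto intro: le_less_trans[OF emeasure_mono[OF ball_subset_cball]]\<close>)
  have "(\<integral>y. indicator (ball x r) y *\<^sub>R \<nu> y \<partial>\<mu>) \<bullet> w = (\<integral>y. indicator (ball x r) y * (w \<bullet> \<nu> y) \<partial>\<mu>)"
    using integral_inner_left[OF intg, of w] by (simp add: inner_commute)
  then show "(\<integral>y. indicator (ball x r) y *\<^sub>R \<nu> y \<partial>\<mu>) \<bullet> w = 0 \<bullet> w"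
    using gauss_green_integral_ball_eq_0[OF assms] by simp
qed

lemma reduced_boundary_subset_closure:
  fixes E :: "'a::euclidean_space set"
  shows "reduced_boundary E \<subseteq> closure E"
proof
  fix x assume "x \<in> reduced_boundary E"
  then obtain \<mu> \<nu> u where gg: "gauss_green E \<mu> \<nu>" and u: "norm u = 1"
    and lim: "((\<lambda>r. (1 / measure \<mu> (ball x r)) *\<^sub>R (\<integral>y. indicator (ball x r) y *\<^sub>R \<nu> y \<partial>\<mu>)) \<longlongrightarrow> u) (at_right 0)"
    unfolding reduced_boundary_def by blast
  show "x \<in> closure E"
  proof (rule ccontr)
    assume "x \<notin> closure E"
    moreover have "open (- closure E)" by auto
    ultimately obtain \<delta> where "0 < \<delta>" and \<delta>: "ball x \<delta> \<subseteq> - closure E"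
      unfolding open_contains_ball by blast
    have disj: "ball x r \<inter> E = {}" if "r < \<delta>" for r
      using subset_ball[of r \<delta> x] that \<delta> closure_subset[of E] by auto
    have "(\<integral>y. indicator (ball x r) y *\<^sub>R \<nu> y \<partial>\<mu>) = 0" if "0 < r" "r < \<delta>" for r
      using gauss_green_integral_ball_polar_eq_0[OF gg that(1) disj[OF that(2)]] .
    then have "\<forall>\<^sub>F r in at_right 0. (1 / measure \<mu> (ball x r)) *\<^sub>R (\<integral>y. indicator (ball x r) y *\<^sub>R \<nu> y \<partial>\<mu>) = 0"
      unfolding eventually_at_right_field using \<open>0 < \<delta>\<close> by (intro exI[of _ \<delta>]) simp
    then have "u = 0"
      by (intro tendsto_unique[OF _ lim] tendsto_eventually) simp_all
    with u show False by simp
  qed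
qed

lemma frontier_lower_half: "frontier (lower_half :: ('b::euclidean_space \<times> real) set) \<subseteq> {x. snd x = 0}"
proof -
  have "closed (lower_half :: ('b \<times> real) set)"
    unfolding lower_half_def by (intro closed_Collect_le continuous_intros)
  moreover have "{x. snd x < 0} \<subseteq> interior (lower_half :: ('b \<times> real) set)"
    by (rule interior_maximal) (auto simp: lower_half_def intro!: open_Collect_less continuous_intros)
  ultimately show ?thesis
    unfolding frontier_def
    by (auto simp: lower_half_def subset_iff) (meson linorder_neqE_linordered_idom not_le)
qed

lemma hausdorff_measure_empty: "hausdorff_measure s ({} :: 'a::metric_space set) = 0"
proof -
  have "hausdorff_delta s \<delta> ({} :: 'a set) = 0" if "0 < \<delta>" for \<delta>
  proof -
    have "hausdorff_delta s \<delta> ({} :: 'a set)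
        \<le> (\<Sum>i. ennreal (hausdorff_omega s * (diameter ((\<lambda>i::nat. {} :: 'a set) i) / 2) powr s))"
      unfolding hausdorff_delta_def using that by (intro INF_lower) auto
    then show ?thesis by simp
  qed
  then show ?thesis unfolding hausdorff_measure_def by simp
qed

lemma P_lambda_eq_perimeter:
  fixes E :: "('b::euclidean_space \<times> real) set"
  assumes "E \<subseteq> {y. c \<le> snd y}" "0 < c"
  shows "P_lambda lam E = perimeter E (- lower_half)"
proof -
  have "closure E \<subseteq> {y. c \<le> snd y}"
    using assms(1) by (rule closure_minimal) (intro closed_Collect_le continuous_intros)
  then have "reduced_boundary E \<inter> frontier lower_half = {}"
    using reduced_boundary_subset_closure[of E] frontier_lower_half assms(2) by fastforce
  then show ?thesis
    by (simp add: P_lambda_def hausdorff_measure_empty zero_ennreal.rep_eq)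
qed

section \<open>Perimeter bounds from translations\<close>

definition translate_symdiff :: "'a::ab_group_add \<Rightarrow> 'a set \<Rightarrow> 'a set" where
  "translate_symdiff v A = {y. (y - v \<in> A) \<noteq> (y \<in> A)}"

lemma translate_symdiff_borel [measurable]:
  fixes A :: "'a::euclidean_space set"
  assumes [measurable]: "A \<in> sets borel"
  shows "translate_symdiff v A \<in> sets borel"
  unfolding translate_symdiff_def by measurable

lemma lborel_integral_translate:
  fixes f :: "'a::euclidean_space \<Rightarrow> real"
  assumes "f \<in> borel_measurable borel"
  shows "(\<integral>x. f (x + c) \<partial>lborel) = (\<integral>x. f x \<partial>lborel)"
  using integral_distr[of "(+) c" lborel borel f] assms by (simp add: lborel_distr_plus add.commute)

lemma lborel_integrable_translate:
  fixes f :: "'a::euclidean_space \<Rightarrow> real"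
  assumes "f \<in> borel_measurable borel"
  shows "integrable lborel (\<lambda>x. f (x + c)) \<longleftrightarrow> integrable lborel f"
  using integrable_distr_eq[of "(+) c" lborel borel f] assms by (simp add: lborel_distr_plus add.commute)

lemma integral_indicator_translate_diff:
  fixes f :: "'a::euclidean_space \<Rightarrow> real"
  assumes [measurable]: "f \<in> borel_measurable borel" "A \<in> sets borel"
    and "emeasure lborel A < \<infinity>" and "\<And>x. \<bar>f x\<bar> \<le> 1"
  shows "integrable lborel (\<lambda>y. (indicator A (y - c) - indicator A y) * f y)"
    and "(\<integral>x. indicator A x * (f (x + c) - f x) \<partial>lborel)
           = (\<integral>y. (indicator A (y - c) - indicator A y) * f y \<partial>lborel)"
proof -
  have int_f: "integrable lborel (\<lambda>x. indicator A x * f (x + v))" for v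
    by (rule integrableI_bounded_set[where A=A and B=1]) (use assms in \<open>auto split: split_indicator\<close>)
  have int_shifted: "integrable lborel (\<lambda>y. indicator A (y - c) * f y)"
    using lborel_integrable_translate[of "\<lambda>y. indicator A (y - c) * f y" c] int_f[of c] by simp
  then show "integrable lborel (\<lambda>y. (indicator A (y - c) - indicator A y) * f y)"
    using int_f[of 0] by (simp add: left_diff_distrib)
  have "(\<integral>x. indicator A x * (f (x + c) - f x) \<partial>lborel)
      = (\<integral>x. indicator A x * f (x + c) \<partial>lborel) - (\<integral>x. indicator A x * f x \<partial>lborel)"
    using int_f[of c] int_f[of 0] by (simp add: right_diff_distrib)
  also have "(\<integral>x. indicator A x * f (x + c) \<partial>lborel) = (\<integral>y. indicator A (y - c) * f y \<partial>lborel)"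
    using lborel_integral_translate[of "\<lambda>y. indicator A (y - c) * f y" c] by simp
  also have "\<dots> - (\<integral>x. indicator A x * f x \<partial>lborel) = (\<integral>y. (indicator A (y - c) - indicator A y) * f y \<partial>lborel)"
    using int_f[of 0] int_shifted by (simp add: left_diff_distrib)
  finally show "(\<integral>x. indicator A x * (f (x + c) - f x) \<partial>lborel)
      = (\<integral>y. (indicator A (y - c) - indicator A y) * f y \<partial>lborel)" .
qed

lemma integral_difference_quotient_le:
  fixes f :: "'a::euclidean_space \<Rightarrow> real"
  assumes [measurable]: "f \<in> borel_measurable borel" "A \<in> sets borel"
    and "emeasure lborel A < \<infinity>" and f_le: "\<And>x. \<bar>f x\<bar> \<le> 1" and "0 < h" "0 \<le> M"
    and defect: "emeasure lborel (translate_symdiff (h *\<^sub>R b) A) \<le> ennreal (h * M)"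
  shows "(\<integral>x. indicator A x * ((f (x + h *\<^sub>R b) - f x) / h) \<partial>lborel) \<le> M"
proof -
  define c where "c = h *\<^sub>R b"
  define D where "D = translate_symdiff c A"
  have D_finite: "emeasure lborel D < \<infinity>"
    using defect unfolding D_def c_def by (simp add: le_less_trans)
  have "(\<integral>x. indicator A x * ((f (x + c) - f x) / h) \<partial>lborel)
      = (\<integral>y. (indicator A (y - c) - indicator A y) * f y \<partial>lborel) / h"
    unfolding integral_divide_zero[symmetric] integral_indicator_translate_diff(2)[OF assms(1-4), symmetric]
    by simp
  also have "\<dots> \<le> (\<integral>y. indicator D y \<partial>lborel) / h"
  proof (intro divide_right_mono integral_mono)
    show "integrable lborel (\<lambda>y. (indicator A (y - c) - indicator A y) * f y)"
      by (rule integral_indicator_translate_diff(1)[OF assms(1-4)])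
    show "integrable lborel (indicator D :: _ \<Rightarrow> real)"
      using D_finite unfolding D_def by simp
    show "(indicator A (y - c) - indicator A y) * f y \<le> (indicator D y :: real)" for y
      using f_le[of y] by (auto simp: D_def translate_symdiff_def abs_le_iff split: split_indicator)
  qed (use \<open>0 < h\<close> in simp)
  also have "\<dots> \<le> M"
    using defect D_finite \<open>0 < h\<close> \<open>0 \<le> M\<close> unfolding D_def c_def
    by (simp add: emeasure_eq_ennreal_measure ennreal_le_iff divide_le_eq mult.commute)
  finally show ?thesis
    unfolding c_def .
qed

lemma has_real_derivative_along_line:
  fixes f :: "'a::real_normed_vector \<Rightarrow> real"
  assumes "(f has_derivative f') (at (x + t *\<^sub>R b))"
  shows "((\<lambda>t. f (x + t *\<^sub>R b)) has_real_derivative f' b) (at t)"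
proof -
  have "((\<lambda>t. x + t *\<^sub>R b) has_derivative (\<lambda>s. s *\<^sub>R b)) (at t)"
    by (auto intro!: derivative_eq_intros)
  from has_derivative_compose[OF this assms]
  have "((\<lambda>t. f (x + t *\<^sub>R b)) has_derivative (\<lambda>s. f' (s *\<^sub>R b))) (at t)" .
  moreover have "(\<lambda>s. f' (s *\<^sub>R b)) = (*) (f' b)"
    using has_derivative_linear[OF assms] by (simp add: linear_scale fun_eq_iff mult.commute)
  ultimately show ?thesis
    unfolding has_field_derivative_def by simp
qed

lemma abs_difference_quotient_le:
  fixes f :: "'a::real_normed_vector \<Rightarrow> real"
  assumes "\<And>x. (f has_derivative f' x) (at x)" "\<And>x. \<bar>f' x b\<bar> \<le> C" "0 < s"
  shows "\<bar>(f (x + s *\<^sub>R b) - f x) / s\<bar> \<le> C"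
proof -
  obtain z where "f (x + s *\<^sub>R b) - f (x + 0 *\<^sub>R b) = (s - 0) * f' (x + z *\<^sub>R b) b"
    using MVT2[of 0 s "\<lambda>t. f (x + t *\<^sub>R b)" "\<lambda>t. f' (x + t *\<^sub>R b) b"] \<open>0 < s\<close>
      has_real_derivative_along_line[OF assms(1)] by blast
  then show ?thesis
    using assms(2) \<open>0 < s\<close> by simp
qed

lemma integral_directional_derivative_le:
  fixes f :: "'a::euclidean_space \<Rightarrow> real"
  assumes der: "\<And>x. (f has_derivative f' x) (at x)"
    and f_le: "\<And>x. \<bar>f x\<bar> \<le> 1" and f'_le: "\<And>x. \<bar>f' x b\<bar> \<le> C"
    and [measurable]: "(\<lambda>x. f' x b) \<in> borel_measurable borel" "A \<in> sets borel"
    and "emeasure lborel A < \<infinity>" "0 \<le> M"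
    and defect: "\<And>h. 0 < h \<Longrightarrow> emeasure lborel (translate_symdiff (h *\<^sub>R b) A) \<le> ennreal (h * M)"
  shows "(\<integral>x. indicator A x * f' x b \<partial>lborel) \<le> M"
proof -
  have "continuous_on UNIV f"
    using der has_derivative_continuous continuous_at_imp_continuous_on by blast
  then have [measurable]: "f \<in> borel_measurable borel"
    by (rule borel_measurable_continuous_onI)
  define h :: "nat \<Rightarrow> real" where "h k = inverse (real (Suc k))" for k
  have h_pos: "0 < h k" for k
    unfolding h_def by simp
  have "filterlim h (at 0) sequentially"
    unfolding filterlim_at using h_pos LIMSEQ_inverse_real_of_nat
    by (auto simp: h_def[abs_def] less_imp_neq[symmetric])
  moreover have "((\<lambda>s. (f (x + s *\<^sub>R b) - f x) / s) \<longlongrightarrow> f' x b) (at 0)" for x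
    using has_real_derivative_along_line[of f "f' x" x 0 b] der unfolding DERIV_def by simp
  ultimately have quotient_lim: "(\<lambda>k. (f (x + h k *\<^sub>R b) - f x) / h k) \<longlonglongrightarrow> f' x b" for x
    by (rule filterlim_compose[rotated])
  have "(\<lambda>k. \<integral>x. indicator A x * ((f (x + h k *\<^sub>R b) - f x) / h k) \<partial>lborel)
      \<longlonglongrightarrow> (\<integral>x. indicator A x * f' x b \<partial>lborel)"
  proof (rule integral_dominated_convergence[where w="\<lambda>x. indicator A x * C"])
    show "integrable lborel (\<lambda>x. indicator A x * C)"
      using assms by (intro integrable_mult_left) auto
    show "AE x in lborel. norm (indicator A x * ((f (x + h k *\<^sub>R b) - f x) / h k)) \<le> indicator A x * C" for k
      using abs_difference_quotient_le[OF der f'_le h_pos] by (intro AE_I2) (auto split: split_indicator)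
    show "AE x in lborel. (\<lambda>k. indicator A x * ((f (x + h k *\<^sub>R b) - f x) / h k))
        \<longlonglongrightarrow> indicator A x * f' x b"
      by (intro AE_I2 tendsto_mult_left quotient_lim)
  qed auto
  moreover have "(\<integral>x. indicator A x * ((f (x + h k *\<^sub>R b) - f x) / h k) \<partial>lborel) \<le> M" for k
    using assms h_pos by (intro integral_difference_quotient_le) auto
  ultimately show ?thesis
    by (intro LIMSEQ_le_const2) auto
qed

lemma bounded_derivative_compact_support:
  fixes T :: "'a::euclidean_space \<Rightarrow> 'b::real_normed_vector"
  assumes der: "\<And>x. (T has_derivative T' x) (at x)"
    and cont: "continuous_on UNIV (\<lambda>x. T' x v)"
    and "compact (closure {x. T x \<noteq> 0})"
  shows "bounded (range (\<lambda>x. T' x v))"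
proof -
  define K where "K = closure {x. T x \<noteq> 0}"
  have "open (- K)" and T0: "\<And>y. y \<in> - K \<Longrightarrow> 0 = T y"
    using closure_subset[of "{x. T x \<noteq> 0}"] unfolding K_def by (auto simp: open_Compl)
  have T'0: "T' x = (\<lambda>_. 0)" if "x \<notin> K" for x
  proof -
    have "(T has_derivative (\<lambda>_. 0)) (at x)"
      by (rule has_derivative_transform_within_open[OF has_derivative_const \<open>open (- K)\<close>])
         (use that T0 in auto)
    then show ?thesis by (rule has_derivative_unique[OF der])
  qed
  have "T' x v \<in> insert 0 ((\<lambda>x. T' x v) ` K)" for x
    using T'0[of x] by (cases "x \<in> K") auto
  then have "range (\<lambda>x. T' x v) \<subseteq> insert 0 ((\<lambda>x. T' x v) ` K)"
    by blast
  moreover have "compact ((\<lambda>x. T' x v) ` K)"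
    using assms(3) unfolding K_def by (intro compact_continuous_image continuous_on_subset[OF cont]) auto
  ultimately show ?thesis
    by (metis bounded_insert bounded_subset compact_imp_bounded)
qed

lemma integral_divergence_le_translate_symdiff:
  fixes A :: "'a::euclidean_space set"
  assumes der: "\<And>x. (T has_derivative T' x) (at x)"
    and cont: "\<And>v. continuous_on UNIV (\<lambda>x. T' x v)"
    and supp: "compact (closure {x. T x \<noteq> 0})" and T_le: "\<And>x. norm (T x) \<le> 1"
    and [measurable]: "A \<in> sets borel" and "emeasure lborel A < \<infinity>" "0 \<le> M"
    and defect: "\<And>b h. b \<in> Basis \<Longrightarrow> 0 < h \<Longrightarrow>
                   emeasure lborel (translate_symdiff (h *\<^sub>R b) A) \<le> ennreal (h * M)"
  shows "(LINT x:A|lebesgue. divergence T x) \<le> real DIM('a) * M"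
proof -
  have [measurable]: "(\<lambda>x. T' x b \<bullet> b) \<in> borel_measurable borel" for b
    using cont[of b] by (intro borel_measurable_continuous_onI continuous_intros)
  have bounded: "\<exists>C. \<forall>x. \<bar>T' x b \<bullet> b\<bar> \<le> C" for b
  proof -
    obtain C where "\<And>x. norm (T' x b) \<le> C"
      using bounded_derivative_compact_support[OF der cont supp] unfolding bounded_iff by blast
    then have "\<bar>T' x b \<bullet> b\<bar> \<le> C * norm b" for x
      by (meson Cauchy_Schwarz_ineq2 mult_right_mono norm_ge_zero order_trans)
    then show ?thesis by blast
  qed
  have integrable: "integrable lborel (\<lambda>x. indicator A x * (T' x b \<bullet> b))" for b
  proof -
    obtain C where "\<forall>x. \<bar>T' x b \<bullet> b\<bar> \<le> C" using bounded by blast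
    then show ?thesis
      by (intro integrableI_bounded_set[where A=A and B=C]) (use assms in \<open>auto split: split_indicator\<close>)
  qed
  have partial_le: "(\<integral>x. indicator A x * (T' x b \<bullet> b) \<partial>lborel) \<le> M" if b: "b \<in> Basis" for b
  proof -
    obtain C where "\<forall>x. \<bar>T' x b \<bullet> b\<bar> \<le> C" using bounded by blast
    moreover have "((\<lambda>x. T x \<bullet> b) has_derivative (\<lambda>v. T' x v \<bullet> b)) (at x)" for x
      using der[of x] by (auto intro!: derivative_eq_intros)
    moreover have "\<bar>T x \<bullet> b\<bar> \<le> 1" for x
      using Basis_le_norm[OF b, of "T x"] T_le by (meson order_trans)
    ultimately show ?thesis
      using assms b by (intro integral_directional_derivative_le[where f="\<lambda>x. T x \<bullet> b" and C=C]) auto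
  qed
  have "frechet_derivative T (at x) = T' x" for x
    using frechet_derivative_at[OF der[of x]] by simp
  then have "(LINT x:A|lebesgue. divergence T x) = (\<integral>x. indicator A x * (\<Sum>b\<in>Basis. T' x b \<bullet> b) \<partial>lborel)"
    unfolding set_lebesgue_integral_def divergence_def by (simp add: integral_completion)
  also have "\<dots> = (\<Sum>b\<in>Basis. \<integral>x. indicator A x * (T' x b \<bullet> b) \<partial>lborel)"
    unfolding sum_distrib_left by (rule Bochner_Integration.integral_sum) (rule integrable)
  also have "\<dots> \<le> (\<Sum>b\<in>(Basis::'a set). M)"
    by (rule sum_mono) (rule partial_le)
  finally show ?thesis
    by simp
qed

lemma perimeter_le_translate_symdiff:
  fixes A :: "'a::euclidean_space set"
  assumes "A \<in> sets borel" "emeasure lborel A < \<infinity>" "0 \<le> M"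
    and "\<And>b h. b \<in> Basis \<Longrightarrow> 0 < h \<Longrightarrow>
           emeasure lborel (translate_symdiff (h *\<^sub>R b) A) \<le> ennreal (h * M)"
  shows "perimeter A U \<le> ereal (real DIM('a) * M)"
  unfolding perimeter_def
proof (rule SUP_least)
  fix T :: "'a \<Rightarrow> 'a" assume "T \<in> {T \<in> Cc1_fields U. \<forall>x. norm (T x) \<le> 1}"
  then obtain T' where "\<And>x. (T has_derivative T' x) (at x)" "\<And>v. continuous_on UNIV (\<lambda>x. T' x v)"
    "compact (closure {x. T x \<noteq> 0})" "\<And>x. norm (T x) \<le> 1"
    unfolding Cc1_fields_def by blast
  from integral_divergence_le_translate_symdiff[OF this assms]
  show "ereal (LINT x:A|lebesgue. divergence T x) \<le> ereal (real DIM('a) * M)"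
    by simp
qed

lemma emeasure_cbox_le_width:
  fixes l u b :: "'a::euclidean_space"
  assumes "\<forall>i\<in>Basis. l \<bullet> i \<le> u \<bullet> i" and b: "b \<in> Basis"
    and other: "\<forall>i\<in>Basis - {b}. (u - l) \<bullet> i \<le> 1"
  shows "emeasure lborel (cbox l u) \<le> ennreal ((u - l) \<bullet> b)"
proof -
  have nonneg: "\<forall>i\<in>Basis. 0 \<le> (u - l) \<bullet> i"
    using assms(1) by (simp add: inner_diff_left)
  have "(\<Prod>i\<in>Basis - {b}. (u - l) \<bullet> i) \<le> 1"
    using nonneg other by (intro prod_le_1) auto
  then have "(u - l) \<bullet> b * (\<Prod>i\<in>Basis - {b}. (u - l) \<bullet> i) \<le> (u - l) \<bullet> b"
    using nonneg b by (simp add: mult_left_le)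
  then show ?thesis
    using assms(1) nonneg b by (simp add: prod_ennreal prod.remove ennreal_leI)
qed

lemma translate_symdiff_cbox_subset:
  fixes a c b :: "'a::euclidean_space"
  assumes b: "b \<in> Basis" and "0 < h"
  shows "translate_symdiff (h *\<^sub>R b) (cbox a c)
           \<subseteq> cbox a (c + (a \<bullet> b + h - c \<bullet> b) *\<^sub>R b) \<union> cbox (a + (c \<bullet> b - a \<bullet> b) *\<^sub>R b) (c + h *\<^sub>R b)"
proof
  fix y assume "y \<in> translate_symdiff (h *\<^sub>R b) (cbox a c)"
  then consider "y \<in> cbox a c" "y - h *\<^sub>R b \<notin> cbox a c" | "y \<notin> cbox a c" "y - h *\<^sub>R b \<in> cbox a c"
    unfolding translate_symdiff_def by auto
  then show "y \<in> cbox a (c + (a \<bullet> b + h - c \<bullet> b) *\<^sub>R b) \<union> cbox (a + (c \<bullet> b - a \<bullet> b) *\<^sub>R b) (c + h *\<^sub>R b)"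
  proof cases
    case 1
    then have y: "\<forall>i\<in>Basis. a \<bullet> i \<le> y \<bullet> i \<and> y \<bullet> i \<le> c \<bullet> i"
      by (simp add: mem_box)
    from 1 obtain i where "i \<in> Basis" "\<not> (a \<bullet> i \<le> (y - h *\<^sub>R b) \<bullet> i \<and> (y - h *\<^sub>R b) \<bullet> i \<le> c \<bullet> i)"
      by (auto simp: mem_box)
    moreover from this y b have "i = b"
      by (cases "i = b") (auto simp: inner_diff_left inner_Basis)
    ultimately have "y \<bullet> b < a \<bullet> b + h"
      using y \<open>0 < h\<close> b by (auto simp: inner_diff_left)
    then show ?thesis
      using y b by (auto simp: mem_box inner_add_left inner_Basis)
  next
    case 2
    then have y: "\<forall>i\<in>Basis. a \<bullet> i \<le> (y - h *\<^sub>R b) \<bullet> i \<and> (y - h *\<^sub>R b) \<bullet> i \<le> c \<bullet> i"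
      by (simp add: mem_box)
    from 2 obtain i where "i \<in> Basis" "\<not> (a \<bullet> i \<le> y \<bullet> i \<and> y \<bullet> i \<le> c \<bullet> i)"
      by (auto simp: mem_box)
    moreover from this y b have "i = b"
      by (cases "i = b") (auto simp: inner_diff_left inner_Basis)
    ultimately have "c \<bullet> b < y \<bullet> b"
      using y \<open>0 < h\<close> b by (auto simp: inner_diff_left)
    then show ?thesis
      using y b by (auto simp: mem_box inner_add_left inner_diff_left inner_Basis)
  qed
qed

lemma emeasure_translate_symdiff_cbox_le:
  fixes a c b :: "'a::euclidean_space"
  assumes box: "\<forall>i\<in>Basis. a \<bullet> i \<le> c \<bullet> i \<and> c \<bullet> i \<le> a \<bullet> i + 1" and b: "b \<in> Basis" and "0 < h"
  shows "emeasure lborel (translate_symdiff (h *\<^sub>R b) (cbox a c)) \<le> ennreal (2 * h)"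
proof -
  let ?S1 = "cbox a (c + (a \<bullet> b + h - c \<bullet> b) *\<^sub>R b)"
  let ?S2 = "cbox (a + (c \<bullet> b - a \<bullet> b) *\<^sub>R b) (c + h *\<^sub>R b)"
  have "emeasure lborel (translate_symdiff (h *\<^sub>R b) (cbox a c)) \<le> emeasure lborel (?S1 \<union> ?S2)"
    by (rule emeasure_mono[OF translate_symdiff_cbox_subset[OF b \<open>0 < h\<close>]]) auto
  also have "\<dots> \<le> emeasure lborel ?S1 + emeasure lborel ?S2"
    by (rule emeasure_subadditive) auto
  also have "\<dots> \<le> ennreal h + ennreal h"
    using box b \<open>0 < h\<close>
    by (intro add_mono order_trans[OF emeasure_cbox_le_width[OF _ b]])
       (auto simp: inner_add_left inner_diff_left inner_Basis)
  also have "\<dots> = ennreal (2 * h)"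
    using \<open>0 < h\<close> by (simp add: ennreal_plus[symmetric] del: ennreal_plus)
  finally show ?thesis .
qed

lemma emeasure_translate_symdiff_UNION_le:
  fixes Q :: "'i \<Rightarrow> 'a::euclidean_space set"
  assumes "finite I" and [measurable]: "\<And>i. i \<in> I \<Longrightarrow> Q i \<in> sets borel"
    and each: "\<And>i. i \<in> I \<Longrightarrow> emeasure lborel (translate_symdiff v (Q i)) \<le> ennreal K"
    and "0 \<le> K"
  shows "emeasure lborel (translate_symdiff v (\<Union>i\<in>I. Q i)) \<le> ennreal (K * card I)"
proof -
  have "emeasure lborel (translate_symdiff v (\<Union>i\<in>I. Q i))
      \<le> emeasure lborel (\<Union>i\<in>I. translate_symdiff v (Q i))"
    by (rule emeasure_mono) (auto simp: translate_symdiff_def \<open>finite I\<close>)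
  also have "\<dots> \<le> (\<Sum>i\<in>I. emeasure lborel (translate_symdiff v (Q i)))"
    by (rule emeasure_subadditive_finite) (auto simp: \<open>finite I\<close>)
  also have "\<dots> \<le> (\<Sum>i\<in>I. ennreal K)"
    by (rule sum_mono) (rule each)
  also have "\<dots> = ennreal (K * card I)"
    using \<open>0 \<le> K\<close> by (simp add: ennreal_of_nat_eq_real_of_nat ennreal_mult' mult.commute)
  finally show ?thesis .
qed

section \<open>The nonlocal and potential energies\<close>

lemma nn_integral_lborel_translate:
  fixes F :: "'a::euclidean_space \<Rightarrow> ennreal"
  assumes [measurable]: "F \<in> borel_measurable borel"
  shows "(\<integral>\<^sup>+ y. F (y - x) \<partial>lborel) = (\<integral>\<^sup>+ z. F z \<partial>lborel)"
  using nn_integral_distr[of "(+) x" lborel borel "\<lambda>y. F (y - x)"]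
  by (simp add: lborel_distr_plus)

lemma nn_integral_ball_half_le_translate:
  fixes g :: "'a::euclidean_space \<Rightarrow> real"
  assumes [measurable]: "g \<in> borel_measurable borel" and "x \<in> ball 0 (1/2)"
  shows "(\<integral>\<^sup>+ z. ennreal (g z) * indicator (ball 0 (1/2)) z \<partial>lborel)
           \<le> (\<integral>\<^sup>+ y. ennreal (g (y - x)) * indicator (ball 0 1) y \<partial>lebesgue)"
proof -
  have [measurable]: "ball (0::'a) (1/2) \<in> sets borel" by simp
  have "(\<integral>\<^sup>+ z. ennreal (g z) * indicator (ball 0 (1/2)) z \<partial>lborel)
      = (\<integral>\<^sup>+ y. ennreal (g (y - x)) * indicator (ball 0 (1/2)) (y - x) \<partial>lborel)"
    by (rule nn_integral_lborel_translate[symmetric]) measurable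
  also have "\<dots> \<le> (\<integral>\<^sup>+ y. ennreal (g (y - x)) * indicator (ball 0 1) y \<partial>lborel)"
  proof (rule nn_integral_mono)
    fix y
    have "norm y \<le> norm (y - x) + norm x"
      by (metis diff_add_cancel norm_triangle_ineq)
    then have "y - x \<in> ball 0 (1/2) \<Longrightarrow> y \<in> ball 0 1"
      using assms(2) by auto
    then show "ennreal (g (y - x)) * indicator (ball 0 (1/2)) (y - x)
        \<le> ennreal (g (y - x)) * indicator (ball 0 1) y"
      by (auto split: split_indicator)
  qed
  finally show ?thesis
    by (simp add: nn_integral_completion)
qed

lemma R_admissible_nn_integral_ball_finite:
  fixes g :: "'a::euclidean_space \<Rightarrow> real"
  assumes [measurable]: "g \<in> borel_measurable borel" and "R_admissible g"
  shows "(\<integral>\<^sup>+ z. ennreal (g z) * indicator (ball 0 (1/2)) z \<partial>lborel) < \<infinity>"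
proof -
  define K where "K = (\<integral>\<^sup>+ z. ennreal (g z) * indicator (ball 0 (1/2)) z \<partial>lborel)"
  have "K * emeasure lebesgue (ball (0::'a) (1/2)) = (\<integral>\<^sup>+ x. K * indicator (ball (0::'a) (1/2)) x \<partial>lebesgue)"
    by (simp add: nn_integral_cmult_indicator)
  also have "\<dots> \<le> R_energy g (ball 0 1)"
    unfolding R_energy_def K_def
    by (rule nn_integral_mono) (auto simp: nn_integral_ball_half_le_translate split: split_indicator)
  also have "\<dots> < \<infinity>"
    using \<open>R_admissible g\<close> by (simp add: R_admissible_def)
  finally have "K * emeasure lebesgue (ball (0::'a) (1/2)) < \<infinity>" .
  moreover have "emeasure lebesgue (ball (0::'a) (1/2)) \<noteq> 0"
    using content_ball_pos[of "1/2" "0::'a"] by (auto simp: measure_def)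
  ultimately show ?thesis
    unfolding K_def by (auto simp: ennreal_mult_less_top top.not_eq_extremum)
qed

lemma nn_integral_translate_separated_le:
  fixes g :: "'a::euclidean_space \<Rightarrow> real" and E :: "'a set"
  assumes [measurable]: "g \<in> borel_measurable borel" "E \<in> sets borel"
    and "emeasure lborel E = ennreal m" "0 < m" "x \<in> E"
    and separated: "\<And>y. y \<in> E \<Longrightarrow> norm (y - x) < 1/2 \<or> R \<le> norm (y - x)"
    and small: "\<And>z. R \<le> norm z \<Longrightarrow> g z \<le> 1/m"
  shows "(\<integral>\<^sup>+ y. ennreal (g (y - x)) * indicator E y \<partial>lebesgue)
           \<le> (\<integral>\<^sup>+ z. ennreal (g z) * indicator (ball 0 (1/2)) z \<partial>lborel) + 1"
proof -
  have [measurable]: "ball (0::'a) (1/2) \<in> sets borel" by simp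
  have "(\<integral>\<^sup>+ y. ennreal (g (y - x)) * indicator E y \<partial>lebesgue)
      \<le> (\<integral>\<^sup>+ y. ennreal (g (y - x)) * indicator (ball 0 (1/2)) (y - x) + ennreal (1/m) * indicator E y \<partial>lborel)"
    unfolding nn_integral_completion
  proof (rule nn_integral_mono)
    fix y
    have "ennreal (g (y - x)) \<le> ennreal (1/m)" if "R \<le> norm (y - x)"
      using small that by (intro ennreal_leI) auto
    then show "ennreal (g (y - x)) * indicator E y
        \<le> ennreal (g (y - x)) * indicator (ball 0 (1/2)) (y - x) + ennreal (1/m) * indicator E y"
      using separated[of y] by (auto split: split_indicator intro: add_increasing)
  qed
  also have "\<dots> = (\<integral>\<^sup>+ y. ennreal (g (y - x)) * indicator (ball 0 (1/2)) (y - x) \<partial>lborel)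
      + (\<integral>\<^sup>+ y. ennreal (1/m) * indicator E y \<partial>lborel)"
    by (rule nn_integral_add) auto
  also have "(\<integral>\<^sup>+ y. ennreal (g (y - x)) * indicator (ball 0 (1/2)) (y - x) \<partial>lborel)
      = (\<integral>\<^sup>+ z. ennreal (g z) * indicator (ball 0 (1/2)) z \<partial>lborel)"
    by (rule nn_integral_lborel_translate) measurable
  also have "(\<integral>\<^sup>+ y. ennreal (1/m) * indicator E y \<partial>lborel) = 1"
    using assms(3,4) by (simp add: nn_integral_cmult_indicator ennreal_mult[symmetric])
  finally show ?thesis .
qed

lemma R_energy_le_separated:
  fixes g :: "'a::euclidean_space \<Rightarrow> real" and E :: "'a set"
  assumes "g \<in> borel_measurable borel" "E \<in> sets borel"
    and "emeasure lborel E = ennreal m" "0 < m"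
    and "\<And>x y. x \<in> E \<Longrightarrow> y \<in> E \<Longrightarrow> norm (y - x) < 1/2 \<or> R \<le> norm (y - x)"
    and "\<And>z. R \<le> norm z \<Longrightarrow> g z \<le> 1/m"
  shows "R_energy g E \<le> ((\<integral>\<^sup>+ z. ennreal (g z) * indicator (ball 0 (1/2)) z \<partial>lborel) + 1) * ennreal m"
proof -
  let ?K = "\<integral>\<^sup>+ z. ennreal (g z) * indicator (ball (0::'a) (1/2)) z \<partial>lborel"
  have "R_energy g E \<le> (\<integral>\<^sup>+ x. (?K + 1) * indicator E x \<partial>lebesgue)"
    unfolding R_energy_def using nn_integral_translate_separated_le[OF assms(1-4) _ assms(5,6)]
    by (intro nn_integral_mono) (auto split: split_indicator)
  also have "\<dots> = (?K + 1) * ennreal m"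
    using assms(2,3) by (simp add: nn_integral_cmult_indicator)
  finally show ?thesis .
qed

lemma G_energy_le:
  fixes E :: "('b::euclidean_space \<times> real) set"
  assumes "E \<in> sets lebesgue" "0 \<le> B" and "\<And>x. x \<in> E \<Longrightarrow> G (snd x) \<le> B"
  shows "G_energy G E \<le> ennreal B * emeasure lebesgue E"
proof -
  have "G_energy G E \<le> (\<integral>\<^sup>+ x. ennreal B * indicator E x \<partial>lebesgue)"
    unfolding G_energy_def
    by (rule nn_integral_mono) (use assms(3) in \<open>auto intro: ennreal_leI split: split_indicator\<close>)
  also have "\<dots> = ennreal B * emeasure lebesgue E"
    using assms(1) by (rule nn_integral_cmult_indicator)
  finally show ?thesis .
qed

section \<open>Rows of separated cells\<close>

definition cell :: "'b::euclidean_space \<Rightarrow> real \<Rightarrow> real \<Rightarrow> ('b \<times> real) set" where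
  "cell a s t = cbox (a, 1) (a + s *\<^sub>R One, 1 + t)"

definition cell_row :: "'b::euclidean_space \<Rightarrow> real \<Rightarrow> nat \<Rightarrow> real \<Rightarrow> real \<Rightarrow> ('b \<times> real) set" where
  "cell_row e L N s t = (\<Union>i<N. cell ((real i * L) *\<^sub>R e) s t)"

lemma mem_cell:
  "y \<in> cell a s t \<longleftrightarrow>
     (\<forall>j\<in>Basis. a \<bullet> j \<le> fst y \<bullet> j \<and> fst y \<bullet> j \<le> a \<bullet> j + s) \<and> 1 \<le> snd y \<and> snd y \<le> 1 + t"
  unfolding cell_def cbox_Pair_eq mem_Times_iff cbox_interval
  by (auto simp: mem_box inner_add_left)

lemma cell_borel [measurable]: "cell a s t \<in> sets borel"
  and cell_row_borel [measurable]: "cell_row e L N s t \<in> sets borel"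
  by (auto simp: cell_def cell_row_def)

lemma cell_row_subset: "cell_row e L N s t \<subseteq> {y. 1 \<le> snd y \<and> snd y \<le> 1 + t}"
  by (auto simp: cell_row_def mem_cell)

lemma emeasure_cell:
  fixes a :: "'b::euclidean_space"
  assumes "0 \<le> s" "0 \<le> t"
  shows "emeasure lborel (cell a s t) = ennreal (s ^ DIM('b) * t)"
proof -
  have "emeasure lborel (cell a s t) = emeasure (lborel \<Otimes>\<^sub>M lborel) (cbox a (a + s *\<^sub>R One) \<times> {1..1 + t})"
    unfolding cell_def cbox_Pair_eq cbox_interval lborel_prod ..
  also have "\<dots> = emeasure lborel (cbox a (a + s *\<^sub>R One)) * emeasure lborel {1..1 + t}"
    by (rule lborel.emeasure_pair_measure_Times) auto
  also have "\<dots> = ennreal (s ^ DIM('b) * t)"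
    using assms by (simp add: emeasure_lborel_cbox_eq inner_add_left prod_ennreal ennreal_mult)
  finally show ?thesis .
qed

lemma norm_diff_cell_le:
  fixes a :: "'b::euclidean_space"
  assumes "x \<in> cell a s t" "y \<in> cell a s t" "t \<le> s"
  shows "norm (y - x) \<le> real DIM('b \<times> real) * s"
proof -
  have "norm (fst (y - x)) \<le> (\<Sum>j\<in>(Basis::'b set). \<bar>fst (y - x) \<bullet> j\<bar>)"
    by (rule norm_le_l1)
  also have "\<dots> \<le> (\<Sum>j\<in>(Basis::'b set). s)"
  proof (rule sum_mono)
    fix j :: 'b assume "j \<in> Basis"
    then have "a \<bullet> j \<le> fst x \<bullet> j \<and> fst x \<bullet> j \<le> a \<bullet> j + s" "a \<bullet> j \<le> fst y \<bullet> j \<and> fst y \<bullet> j \<le> a \<bullet> j + s"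
      using assms(1,2) by (auto simp: mem_cell)
    then show "\<bar>fst (y - x) \<bullet> j\<bar> \<le> s"
      by (simp add: inner_diff_left abs_le_iff)
  qed
  finally have "norm (fst (y - x)) \<le> real DIM('b) * s" by simp
  moreover have "norm (snd (y - x)) \<le> s"
    using assms by (auto simp: mem_cell)
  moreover have "norm (y - x) \<le> norm (fst (y - x)) + norm (snd (y - x))"
    by (metis norm_Pair_le prod.collapse)
  ultimately show ?thesis
    by (simp add: algebra_simps)
qed

lemma norm_diff_cells_ge:
  fixes e :: "'b::euclidean_space"
  assumes e: "e \<in> Basis" and "0 \<le> L"
    and x: "x \<in> cell ((real i * L) *\<^sub>R e) s t" and y: "y \<in> cell ((real j * L) *\<^sub>R e) s t" and "i \<noteq> j"
  shows "L - s \<le> norm (y - x)"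
proof -
  have x_e: "real i * L \<le> fst x \<bullet> e \<and> fst x \<bullet> e \<le> real i * L + s"
    and y_e: "real j * L \<le> fst y \<bullet> e \<and> fst y \<bullet> e \<le> real j * L + s"
    using x y e by (auto simp: mem_cell)
  have "L - s \<le> \<bar>fst (y - x) \<bullet> e\<bar>"
  proof (cases "i < j")
    case True
    then have "(real i + 1) * L \<le> real j * L"
      using \<open>0 \<le> L\<close> by (intro mult_right_mono) auto
    then have "L - s \<le> (fst y - fst x) \<bullet> e"
      using x_e y_e by (simp add: inner_diff_left algebra_simps)
    then show ?thesis by (rule order_trans) simp
  next
    case False
    then have "(real j + 1) * L \<le> real i * L"
      using \<open>i \<noteq> j\<close> \<open>0 \<le> L\<close> by (intro mult_right_mono) auto
    then have "L - s \<le> - ((fst y - fst x) \<bullet> e)"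
      using x_e y_e by (simp add: inner_diff_left algebra_simps)
    then show ?thesis by (rule order_trans) simp
  qed
  also have "\<dots> \<le> norm (fst (y - x))"
    by (rule Basis_le_norm[OF e])
  also have "\<dots> \<le> norm (y - x)"
    by (metis norm_fst_le prod.collapse)
  finally show ?thesis .
qed

lemma cell_row_separated:
  fixes e :: "'b::euclidean_space"
  assumes "e \<in> Basis" "0 \<le> L" "t \<le> s" "x \<in> cell_row e L N s t" "y \<in> cell_row e L N s t"
  shows "norm (y - x) \<le> real DIM('b \<times> real) * s \<or> L - s \<le> norm (y - x)"
proof -
  obtain i j where "x \<in> cell ((real i * L) *\<^sub>R e) s t" "y \<in> cell ((real j * L) *\<^sub>R e) s t"
    using assms(4,5) unfolding cell_row_def by blast
  then show ?thesis
    using norm_diff_cell_le[OF _ _ \<open>t \<le> s\<close>, of x _ y] norm_diff_cells_ge[OF assms(1,2), of x i s t y j]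
    by (cases "i = j") auto
qed

lemma emeasure_cell_row:
  fixes e :: "'b::euclidean_space"
  assumes "e \<in> Basis" "0 \<le> s" "s < L" "0 \<le> t"
  shows "emeasure lborel (cell_row e L N s t) = ennreal (real N * s ^ DIM('b) * t)"
proof -
  have "cell ((real i * L) *\<^sub>R e) s t \<inter> cell ((real j * L) *\<^sub>R e) s t = {}" if "i \<noteq> j" for i j
  proof -
    have "x \<notin> cell ((real j * L) *\<^sub>R e) s t" if "x \<in> cell ((real i * L) *\<^sub>R e) s t" for x
      using norm_diff_cells_ge[OF assms(1) _ that _ \<open>i \<noteq> j\<close>, of x] assms(2,3) by auto
    then show ?thesis by blast
  qed
  then have "disjoint_family_on (\<lambda>i. cell ((real i * L) *\<^sub>R e) s t) {..<N}"
    unfolding disjoint_family_on_def by blast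
  then have "emeasure lborel (cell_row e L N s t) = (\<Sum>i<N. emeasure lborel (cell ((real i * L) *\<^sub>R e) s t))"
    unfolding cell_row_def by (intro sum_emeasure[symmetric]) auto
  also have "\<dots> = ennreal (real N * s ^ DIM('b) * t)"
    using assms by (simp add: emeasure_cell ennreal_of_nat_eq_real_of_nat ennreal_mult mult.assoc)
  finally show ?thesis .
qed

lemma emeasure_translate_symdiff_cell_row_le:
  fixes e :: "'b::euclidean_space" and b :: "'b \<times> real"
  assumes "b \<in> Basis" "0 < h" "0 \<le> s" "s \<le> 1" "0 \<le> t" "t \<le> 1"
  shows "emeasure lborel (translate_symdiff (h *\<^sub>R b) (cell_row e L N s t)) \<le> ennreal (h * (2 * real N))"
proof -
  have "emeasure lborel (translate_symdiff (h *\<^sub>R b) (cell ((real i * L) *\<^sub>R e) s t)) \<le> ennreal (2 * h)" for i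
    unfolding cell_def using assms
    by (intro emeasure_translate_symdiff_cbox_le) (auto simp: Basis_prod_def inner_add_left)
  then have "emeasure lborel (translate_symdiff (h *\<^sub>R b) (\<Union>i<N. cell ((real i * L) *\<^sub>R e) s t))
      \<le> ennreal (2 * h * card {..<N})"
    using \<open>0 < h\<close> by (intro emeasure_translate_symdiff_UNION_le) auto
  then show ?thesis
    unfolding cell_row_def by (simp add: algebra_simps)
qed

lemma P_lambda_cell_row_le:
  fixes e :: "'b::euclidean_space"
  assumes "e \<in> Basis" "0 \<le> s" "s \<le> 1" "s < L" "0 \<le> t" "t \<le> 1"
  shows "P_lambda lam (cell_row e L N s t) \<le> ereal (real DIM('b \<times> real) * (2 * real N))"
proof -
  have "P_lambda lam (cell_row e L N s t) = perimeter (cell_row e L N s t) (- lower_half)"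
    using cell_row_subset[of e L N s t] by (intro P_lambda_eq_perimeter[where c=1]) auto
  also have "\<dots> \<le> ereal (real DIM('b \<times> real) * (2 * real N))"
    using assms by (intro perimeter_le_translate_symdiff)
      (auto simp: emeasure_cell_row intro: emeasure_translate_symdiff_cell_row_le)
  finally show ?thesis .
qed

lemma obtain_cell_count:
  fixes m s :: real
  assumes "0 < m" "0 < s"
  obtains N :: nat and t where "1 \<le> N" "0 < t" "t \<le> s" "real N * s ^ k * t = m" "real N \<le> m / s ^ Suc k + 1"
proof
  define N where "N = nat \<lceil>m / s ^ Suc k\<rceil>"
  have "0 < m / s ^ Suc k" using assms by simp
  then have N: "m / s ^ Suc k \<le> real N" "real N \<le> m / s ^ Suc k + 1"
    unfolding N_def by linarith+
  then show "1 \<le> N" "real N \<le> m / s ^ Suc k + 1"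
    using \<open>0 < m / s ^ Suc k\<close> by linarith+
  define t where "t = m / (real N * s ^ k)"
  show "0 < t" "real N * s ^ k * t = m"
    using assms \<open>1 \<le> N\<close> by (simp_all add: t_def)
  have "m \<le> real N * s ^ k * s"
    using N(1) assms by (simp add: field_simps)
  then show "t \<le> s"
    using assms \<open>1 \<le> N\<close> by (simp add: t_def divide_le_eq mult.commute)
qed

lemma F_energy_cell_row_le:
  fixes g :: "('b::euclidean_space \<times> real) \<Rightarrow> real" and e :: 'b
  assumes [measurable]: "g \<in> borel_measurable borel"
    and K: "(\<integral>\<^sup>+ z. ennreal (g z) * indicator (ball 0 (1/2)) z \<partial>lborel) = ennreal K" "0 \<le> K"
    and small: "\<And>z. R \<le> norm z \<Longrightarrow> g z \<le> 1/m"
    and G_le: "\<And>\<tau>. 0 < \<tau> \<Longrightarrow> \<tau> < 2 \<Longrightarrow> G \<tau> \<le> B" and "0 \<le> B"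
    and e: "e \<in> Basis" and s: "0 < s" "real DIM('b \<times> real) * s \<le> 1/4"
    and t: "0 < t" "t \<le> s" and L: "0 \<le> R" "R + s < L"
    and measure: "emeasure lborel (cell_row e L N s t) = ennreal m" "0 < m"
  shows "F_energy lam g G (cell_row e L N s t)
           \<le> ereal (real DIM('b \<times> real) * (2 * real N) + (K + 1) * m + B * m)"
proof -
  let ?E = "cell_row e L N s t"
  have "s \<le> real DIM('b \<times> real) * s"
    using s(1) by (simp add: DIM_positive Suc_le_eq)
  then have "s \<le> 1/4"
    using s(2) by linarith
  have height: "1 \<le> snd y \<and> snd y \<le> 1 + t" if "y \<in> ?E" for y
    using cell_row_subset that by blast
  have P: "P_lambda lam ?E \<le> ereal (real DIM('b \<times> real) * (2 * real N))"
    using e s t L \<open>s \<le> 1/4\<close> by (intro P_lambda_cell_row_le) auto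
  have "R_energy g ?E \<le> (ennreal K + 1) * ennreal m"
    unfolding K(1)[symmetric]
  proof (rule R_energy_le_separated[OF _ _ measure])
    fix x y assume "x \<in> ?E" "y \<in> ?E"
    from cell_row_separated[OF e _ \<open>t \<le> s\<close> this] L s
    show "norm (y - x) < 1/2 \<or> R \<le> norm (y - x)" by linarith
  qed (use small in auto)
  also have "\<dots> = ennreal ((K + 1) * m)"
    using K(2) measure(2) by (simp add: ennreal_mult)
  finally have R: "enn2ereal (R_energy g ?E) \<le> ereal ((K + 1) * m)"
    using K(2) measure(2) by (simp add: less_eq_ennreal.rep_eq)
  have "G (snd y) \<le> B" if "y \<in> ?E" for y
    using height[OF that] t \<open>s \<le> 1/4\<close> by (intro G_le) linarith+
  then have "G_energy G ?E \<le> ennreal B * emeasure lebesgue ?E"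
    using \<open>0 \<le> B\<close> by (intro G_energy_le) auto
  also have "\<dots> = ennreal (B * m)"
    using measure \<open>0 \<le> B\<close> by (simp add: ennreal_mult)
  finally have G: "enn2ereal (G_energy G ?E) \<le> ereal (B * m)"
    using measure(2) \<open>0 \<le> B\<close> by (simp add: less_eq_ennreal.rep_eq)
  show ?thesis
    unfolding F_energy_def using add_mono[OF add_mono[OF P R] G] by simp
qed

lemma infinitesimal_le:
  fixes g :: "'a::euclidean_space \<Rightarrow> real"
  assumes "infinitesimal g" "0 < \<epsilon>"
  obtains R where "0 \<le> R" "\<And>z. R \<le> norm z \<Longrightarrow> g z \<le> \<epsilon>"
proof -
  obtain R where "\<And>z. R \<le> norm z \<Longrightarrow> dist (g z) 0 < \<epsilon>"
    using assms unfolding infinitesimal_def Lim_at_infinity by blast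
  then have "g z \<le> \<epsilon>" if "max R 0 \<le> norm z" for z
    using that by fastforce
  then show ?thesis
    using that[of "max R 0"] by simp
qed

lemma ex_cell_row_energy_le:
  fixes g :: "('b::euclidean_space \<times> real) \<Rightarrow> real"
  assumes [measurable]: "g \<in> borel_measurable borel" and "infinitesimal g"
    and K: "(\<integral>\<^sup>+ z. ennreal (g z) * indicator (ball 0 (1/2)) z \<partial>lborel) = ennreal K" "0 \<le> K"
    and B: "\<And>\<tau>. 0 < \<tau> \<Longrightarrow> \<tau> < 2 \<Longrightarrow> G \<tau> \<le> B" "0 \<le> B"
    and "1 \<le> m"
  shows "\<exists>E. E \<in> sets lebesgue \<and> E \<subseteq> - lower_half \<and> emeasure lebesgue E = ennreal m \<and>
           F_energy lam g G E \<le> ereal ((2 * real DIM('b \<times> real) *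
             ((4 * real DIM('b \<times> real)) ^ DIM('b \<times> real) + 1) + (K + 1) + B) * m)"
proof -
  define d where "d = real DIM('b \<times> real)"
  \<comment> \<open>cells of side \<open>s\<close> and height \<open>t \<le> s\<close> have diameter at most \<open>d * s = 1/4\<close>\<close>
  define s where "s = 1 / (4 * d)"
  have "1 \<le> d" "d * s = 1/4"
    by (simp_all add: d_def s_def)
  then have "0 < s" "s < 1"
    unfolding s_def by (simp_all add: field_simps)
  obtain R where R: "0 \<le> R" "\<And>z. R \<le> norm z \<Longrightarrow> g z \<le> 1/m"
    using infinitesimal_le[OF assms(2), of "1/m"] \<open>1 \<le> m\<close> by auto
  obtain N t where N: "1 \<le> N" "0 < t" "t \<le> s" "real N * s ^ DIM('b) * t = m"
      "real N \<le> m / s ^ Suc DIM('b) + 1"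
    using obtain_cell_count[of m s] \<open>1 \<le> m\<close> \<open>0 < s\<close> by auto
  obtain e :: 'b where "e \<in> Basis"
    using nonempty_Basis by blast
  \<comment> \<open>spacing \<open>R + 1 > R + s\<close> keeps points of distinct cells at distance at least \<open>R\<close>\<close>
  define E where "E = cell_row e (R + 1) N s t"
  have measure: "emeasure lborel E = ennreal m"
    unfolding E_def using N \<open>e \<in> Basis\<close> \<open>0 < s\<close> \<open>0 \<le> R\<close> \<open>s < 1\<close>
    by (subst emeasure_cell_row) auto
  have "F_energy lam g G E \<le> ereal (d * (2 * real N) + (K + 1) * m + B * m)"
    unfolding E_def d_def
    using \<open>1 \<le> m\<close> N \<open>0 < s\<close> \<open>d * s = 1/4\<close> \<open>0 \<le> R\<close> \<open>s < 1\<close> measure[unfolded E_def]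
    by (intro F_energy_cell_row_le[OF assms(1) K R(2) B \<open>e \<in> Basis\<close>]) (auto simp: d_def)
  also have "\<dots> \<le> ereal ((2 * d * ((4 * d) ^ DIM('b \<times> real) + 1) + (K + 1) + B) * m)"
  proof -
    have "m / s ^ Suc DIM('b) = m * (4 * d) ^ DIM('b \<times> real)"
      by (simp add: s_def power_one_over)
    then have "d * (2 * real N) \<le> 2 * d * (m * (4 * d) ^ DIM('b \<times> real) + m)"
      using N(5) \<open>1 \<le> m\<close> \<open>1 \<le> d\<close> by (simp add: mult_left_mono)
    then show ?thesis
      by (simp add: algebra_simps)
  qed
  finally show ?thesis
    using measure cell_row_subset[of e "R + 1" N s t] unfolding E_def d_def
    by (intro exI[of _ "cell_row e (R + 1) N s t"]) (auto simp: lower_half_def)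
qed

theorem corollary3p3:
  fixes g :: "('b::euclidean_space \<times> real) \<Rightarrow> real" and G :: "real \<Rightarrow> real" and lam :: real
  assumes "-1 < lam" "lam < 1"
    and "g \<in> borel_measurable borel" "R_admissible g" "infinitesimal g"
    and "G \<in> borel_measurable borel" "G_admissible DIM('b \<times> real) G"
  shows "\<exists>c>0. \<forall>m::real. m \<ge> 1 \<longrightarrow>
           (\<exists>E. E \<in> sets lebesgue \<and> E \<subseteq> - lower_half \<and> emeasure lebesgue E = ennreal m \<and>
                F_energy lam g G E \<le> ereal (c * m))"
proof -
  define K where "K = enn2real (\<integral>\<^sup>+ z. ennreal (g z) * indicator (ball 0 (1/2)) z \<partial>lborel)"
  have K: "(\<integral>\<^sup>+ z. ennreal (g z) * indicator (ball 0 (1/2)) z \<partial>lborel) = ennreal K" "0 \<le> K"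
    using R_admissible_nn_integral_ball_finite[OF assms(3,4)] unfolding K_def by (auto simp: less_top)
  have "bdd_above (G ` {0<..<2})"
    using assms(7) by (simp add: G_admissible_def)
  then obtain B where "\<And>\<tau>. \<tau> \<in> {0<..<2} \<Longrightarrow> G \<tau> \<le> B"
    unfolding bdd_above_def by blast
  then have B: "\<And>\<tau>. 0 < \<tau> \<Longrightarrow> \<tau> < 2 \<Longrightarrow> G \<tau> \<le> max B 0"
    by (simp add: max.coboundedI1)
  define d where "d = real DIM('b \<times> real)"
  define c where "c = 2 * d * ((4 * d) ^ DIM('b \<times> real) + 1) + (K + 1) + max B 0"
  have "0 < c"
    unfolding c_def d_def using \<open>0 \<le> K\<close> by (simp add: add_pos_nonneg)
  moreover have "\<exists>E. E \<in> sets lebesgue \<and> E \<subseteq> - lower_half \<and> emeasure lebesgue E = ennreal m \<and>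
                   F_energy lam g G E \<le> ereal (c * m)" if "1 \<le> m" for m
    unfolding c_def d_def by (rule ex_cell_row_energy_le[OF assms(3,5) K]) (use B that in auto)
  ultimately show ?thesis
    by blast
qed

end
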